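(* For any finite simple graph $G$, $\mathrm{mur}(G)=\mathrm{mur}(\overline{G})$, where $\overline{G}$ is the complement of $G$.
   Context: For a finite simple undirected graph $G$ on vertices $v_1,\dots,v_n$, let $A_G$ be its $(0,1)$-adjacency matrix, $D_G=\mathrm{diag}(d_1,\dots,d_n)$ with $d_i$ the degree of $v_i$, $I$ the $n\times n$ identity matrix and $J$ the $n\times n$ all-ones matrix. A universal adjacency matrix of $G$ is any matrix $\alpha A_G+\beta I+\gamma J+\delta D_G$ with real scalars $\alpha,\beta,\gamma,\delta$ and $\alpha\neq 0$. The minimum universal rank $\mathrm{mur}(G)$ is the minimum rank over all universal adjacency matrices of $G$. *)

theory Defs
  imports "HOL-Analysis.Analysis"
begin

definition simple_graph :: "('n::finite \<Rightarrow> 'n \<Rightarrow> bool) \<Rightarrow> bool" where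
  "simple_graph E \<longleftrightarrow> (\<forall>u v. E u v \<longrightarrow> E v u) \<and> (\<forall>v. \<not> E v v)"

definition complement_graph :: "('n::finite \<Rightarrow> 'n \<Rightarrow> bool) \<Rightarrow> 'n \<Rightarrow> 'n \<Rightarrow> bool" where
  "complement_graph E = (\<lambda>u v. u \<noteq> v \<and> \<not> E u v)"

definition adj_matrix :: "('n::finite \<Rightarrow> 'n \<Rightarrow> bool) \<Rightarrow> real^'n^'n" where
  "adj_matrix E = (\<chi> i j. if E i j then 1 else 0)"

definition degree :: "('n::finite \<Rightarrow> 'n \<Rightarrow> bool) \<Rightarrow> 'n \<Rightarrow> nat" where
  "degree E v = card {u. E v u}"

definition degree_matrix :: "('n::finite \<Rightarrow> 'n \<Rightarrow> bool) \<Rightarrow> real^'n^'n" where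
  "degree_matrix E = (\<chi> i j. if i = j then real (degree E i) else 0)"

definition ones_matrix :: "real^'n^'n" where
  "ones_matrix = (\<chi> i j. 1)"

definition universal_adj :: "('n::finite \<Rightarrow> 'n \<Rightarrow> bool) \<Rightarrow> real \<Rightarrow> real \<Rightarrow> real \<Rightarrow> real \<Rightarrow> real^'n^'n" where
  "universal_adj E \<alpha> \<beta> \<gamma> \<delta> =
     \<alpha> *\<^sub>R adj_matrix E + \<beta> *\<^sub>R mat 1 + \<gamma> *\<^sub>R ones_matrix + \<delta> *\<^sub>R degree_matrix E"

definition mur :: "('n::finite \<Rightarrow> 'n \<Rightarrow> bool) \<Rightarrow> nat" where
  "mur E = Min {rank (universal_adj E \<alpha> \<beta> \<gamma> \<delta>) | \<alpha> \<beta> \<gamma> \<delta>. \<alpha> \<noteq> 0}"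

end

theory Submission
  imports Defs
begin

text \<open>Complementation is an affine change of parameters: since
  \<open>A(G\<^sup>c) = J - I - A(G)\<close> and \<open>D(G\<^sup>c) = (n - 1) I - D(G)\<close>, every universal adjacency
  matrix of \<open>G\<^sup>c\<close> is one of \<open>G\<close>, again with nonzero coefficient of the adjacency
  matrix. As complementation is an involution, both graphs have the same set of
  attainable ranks.\<close>

lemma complement_graph_complement_graph:
  assumes "irreflp E"
  shows "complement_graph (complement_graph E) = E"
  using assms by (auto simp: complement_graph_def fun_eq_iff irreflp_def)

lemma irreflp_complement_graph: "irreflp (complement_graph E)"
  by (simp add: complement_graph_def irreflp_def)

lemma degree_complement_graph:
  fixes E :: "'n::finite \<Rightarrow> 'n \<Rightarrow> bool"
  assumes "irreflp E"
  shows "real (degree (complement_graph E) v) = real CARD('n) - 1 - real (degree E v)"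
proof -
  have nbhd_sub: "{u. E v u} \<subseteq> UNIV - {v}"
    using assms by (auto simp: irreflp_def)
  have "{u. complement_graph E v u} = (UNIV - {v}) - {u. E v u}"
    by (auto simp: complement_graph_def)
  then have "card {u. complement_graph E v u} = card (UNIV - {v} :: 'n set) - card {u. E v u}"
    using nbhd_sub by (simp add: card_Diff_subset)
  moreover have "card {u. E v u} \<le> card (UNIV - {v} :: 'n set)"
    using nbhd_sub by (intro card_mono) simp_all
  moreover have "card (UNIV - {v} :: 'n set) = CARD('n) - 1" "CARD('n) \<ge> 1"
    by (simp_all add: card_Diff_singleton Suc_leI)
  ultimately show ?thesis
    unfolding degree_def by (simp only: of_nat_diff)
qed

lemma adj_matrix_complement_graph:
  assumes "irreflp E"
  shows "adj_matrix (complement_graph E) = ones_matrix - mat 1 - adj_matrix E"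
  using assms
  by (auto simp: vec_eq_iff adj_matrix_def ones_matrix_def mat_def complement_graph_def irreflp_def)

lemma degree_matrix_complement_graph:
  fixes E :: "'n::finite \<Rightarrow> 'n \<Rightarrow> bool"
  assumes "irreflp E"
  shows "degree_matrix (complement_graph E) = (real CARD('n) - 1) *\<^sub>R mat 1 - degree_matrix E"
  using degree_complement_graph[OF assms] by (simp add: vec_eq_iff degree_matrix_def mat_def)

lemma universal_adj_complement_graph:
  fixes E :: "'n::finite \<Rightarrow> 'n \<Rightarrow> bool"
  assumes "irreflp E"
  shows "universal_adj (complement_graph E) \<alpha> \<beta> \<gamma> \<delta> =
         universal_adj E (- \<alpha>) (\<beta> - \<alpha> + \<delta> * (real CARD('n) - 1)) (\<gamma> + \<alpha>) (- \<delta>)"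
  unfolding universal_adj_def adj_matrix_complement_graph[OF assms]
    degree_matrix_complement_graph[OF assms]
  by (simp add: algebra_simps scaleR_add_left)

lemma universal_adj_ranks_complement_graph_subset:
  fixes E :: "'n::finite \<Rightarrow> 'n \<Rightarrow> bool"
  assumes "irreflp E"
  shows "{rank (universal_adj (complement_graph E) \<alpha> \<beta> \<gamma> \<delta>) | \<alpha> \<beta> \<gamma> \<delta>. \<alpha> \<noteq> 0}
     \<subseteq> {rank (universal_adj E \<alpha> \<beta> \<gamma> \<delta>) | \<alpha> \<beta> \<gamma> \<delta>. \<alpha> \<noteq> 0}"
proof
  fix r
  assume "r \<in> {rank (universal_adj (complement_graph E) \<alpha> \<beta> \<gamma> \<delta>) | \<alpha> \<beta> \<gamma> \<delta>. \<alpha> \<noteq> 0}"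
  then obtain \<alpha> \<beta> \<gamma> \<delta> where "\<alpha> \<noteq> 0" "r = rank (universal_adj (complement_graph E) \<alpha> \<beta> \<gamma> \<delta>)"
    by blast
  then show "r \<in> {rank (universal_adj E \<alpha> \<beta> \<gamma> \<delta>) | \<alpha> \<beta> \<gamma> \<delta>. \<alpha> \<noteq> 0}"
    unfolding universal_adj_complement_graph[OF assms] by fastforce
qed

theorem lemma1:
  fixes E :: "'n::finite \<Rightarrow> 'n \<Rightarrow> bool"
  assumes "simple_graph E"
  shows "mur E = mur (complement_graph E)"
proof -
  have irrefl: "irreflp E"
    using assms by (simp add: simple_graph_def irreflp_def)
  have "{rank (universal_adj (complement_graph E) \<alpha> \<beta> \<gamma> \<delta>) | \<alpha> \<beta> \<gamma> \<delta>. \<alpha> \<noteq> 0}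
      = {rank (universal_adj E \<alpha> \<beta> \<gamma> \<delta>) | \<alpha> \<beta> \<gamma> \<delta>. \<alpha> \<noteq> 0}"
    using universal_adj_ranks_complement_graph_subset[OF irrefl]
      universal_adj_ranks_complement_graph_subset[OF irreflp_complement_graph, of E]
    unfolding complement_graph_complement_graph[OF irrefl] by (rule subset_antisym)
  then show ?thesis
    unfolding mur_def by simp
qed

end
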